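(* Let $S$ be an idempotent semiring. Then $S$ satisfies the identity $x+xy+x\approx x$ if and only if $S$ satisfies $x+xyx+x\approx x$ and $\mathcal{R}^{\bullet}\subseteq\mathcal{D}^{+}$.
   Context: An idempotent semiring is an algebra $(S,+,\cdot)$ with two binary operations such that $(S,+)$ and $(S,\cdot)$ are bands (associative, with $x+x=x$ and $xx=x$), and both distributive laws $x(y+z)=xy+xz$ and $(x+y)z=xz+yz$ hold; addition is not assumed commutative. Green's relations: $a\,\mathcal{R}^{\bullet}\,b$ iff $ab=b$ and $ba=a$; $a\,\mathcal{D}^{+}\,b$ iff $a+b+a=a$ and $b+a+b=b$. *)

theory Defs
  imports Main
begin

text \<open>An idempotent semiring on the universe of type 'a, with addition a and
multiplication m (addition not assumed commutative).\<close>

definition idem_semiring :: "('a \<Rightarrow> 'a \<Rightarrow> 'a) \<Rightarrow> ('a \<Rightarrow> 'a \<Rightarrow> 'a) \<Rightarrow> bool" where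
  "idem_semiring a m \<longleftrightarrow>
     (\<forall>x y z. a (a x y) z = a x (a y z)) \<and> (\<forall>x. a x x = x) \<and>
     (\<forall>x y z. m (m x y) z = m x (m y z)) \<and> (\<forall>x. m x x = x) \<and>
     (\<forall>x y z. m x (a y z) = a (m x y) (m x z)) \<and>
     (\<forall>x y z. m (a x y) z = a (m x z) (m y z))"

definition R_mul :: "('a \<Rightarrow> 'a \<Rightarrow> 'a) \<Rightarrow> 'a \<Rightarrow> 'a \<Rightarrow> bool" where
  "R_mul m x y \<longleftrightarrow> m x y = y \<and> m y x = x"

definition D_add :: "('a \<Rightarrow> 'a \<Rightarrow> 'a) \<Rightarrow> 'a \<Rightarrow> 'a \<Rightarrow> bool" where
  "D_add a x y \<longleftrightarrow> a (a x y) x = x \<and> a (a y x) y = y"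

end

theory Submission
  imports Defs
begin

text \<open>Put u = x + xy + x. Then xu = u always, and ux = x + xyx + x, so under
x + xyx + x = x we get x R u. If R is contained in D, then x = x + u + x, and by
idempotence of addition x + u + x = u. The converse is immediate: substitute yx
for y, and if xy = y, yx = x then x + y + x = x + xy + x.\<close>

locale idempotent_semiring =
  fixes add :: "'a \<Rightarrow> 'a \<Rightarrow> 'a" (infixl \<open>\<oplus>\<close> 65)
    and mult :: "'a \<Rightarrow> 'a \<Rightarrow> 'a" (infixl \<open>\<cdot>\<close> 70)
  assumes add_assoc: "x \<oplus> y \<oplus> z = x \<oplus> (y \<oplus> z)"
    and add_idem: "x \<oplus> x = x"
    and mult_assoc: "x \<cdot> y \<cdot> z = x \<cdot> (y \<cdot> z)"
    and mult_idem: "x \<cdot> x = x"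
    and distrib_left: "x \<cdot> (y \<oplus> z) = x \<cdot> y \<oplus> x \<cdot> z"
    and distrib_right: "(x \<oplus> y) \<cdot> z = x \<cdot> z \<oplus> y \<cdot> z"

lemma idem_semiring_imp_idempotent_semiring:
  "idem_semiring a m \<Longrightarrow> idempotent_semiring a m"
  unfolding idem_semiring_def idempotent_semiring_def by blast

context idempotent_semiring
begin

lemma add_sandwich_absorb: "x \<oplus> (x \<oplus> z \<oplus> x) \<oplus> x = x \<oplus> z \<oplus> x"
  by (simp only: add_assoc add_idem flip: add_assoc[of x x])

lemma D_add_sandwich_iff: "D_add (\<oplus>) x (x \<oplus> z \<oplus> x) \<longleftrightarrow> x \<oplus> z \<oplus> x = x"
proof
  assume "D_add (\<oplus>) x (x \<oplus> z \<oplus> x)"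
  then have "x \<oplus> (x \<oplus> z \<oplus> x) \<oplus> x = x" unfolding D_add_def by blast
  then show "x \<oplus> z \<oplus> x = x" by (simp only: add_sandwich_absorb)
next
  assume "x \<oplus> z \<oplus> x = x"
  then show "D_add (\<oplus>) x (x \<oplus> z \<oplus> x)" unfolding D_add_def by (simp add: add_idem)
qed

lemma mult_left_sandwich: "x \<cdot> (x \<oplus> x \<cdot> y \<oplus> x) = x \<oplus> x \<cdot> y \<oplus> x"
  by (simp only: distrib_left mult_idem flip: mult_assoc)

lemma mult_right_sandwich: "(x \<oplus> x \<cdot> y \<oplus> x) \<cdot> x = x \<oplus> x \<cdot> y \<cdot> x \<oplus> x"
  by (simp only: distrib_right mult_idem mult_assoc)

lemma R_mul_sandwich_iff: "R_mul (\<cdot>) x (x \<oplus> x \<cdot> y \<oplus> x) \<longleftrightarrow> x \<oplus> x \<cdot> y \<cdot> x \<oplus> x = x"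
  unfolding R_mul_def by (simp only: mult_left_sandwich mult_right_sandwich simp_thms)

lemma R_mul_imp_D_add:
  assumes absorb: "\<And>x y. x \<oplus> x \<cdot> y \<oplus> x = x"
    and "R_mul (\<cdot>) x y"
  shows "D_add (\<oplus>) x y"
proof -
  from \<open>R_mul (\<cdot>) x y\<close> have "x \<cdot> y = y" and "y \<cdot> x = x"
    unfolding R_mul_def by blast+
  then show ?thesis
    unfolding D_add_def using absorb[of x y] absorb[of y x] by simp
qed

theorem absorb_iff_sandwich_absorb_and_R_le_D:
  "(\<forall>x y. x \<oplus> x \<cdot> y \<oplus> x = x) \<longleftrightarrow>
   (\<forall>x y. x \<oplus> x \<cdot> y \<cdot> x \<oplus> x = x) \<and> (\<forall>x y. R_mul (\<cdot>) x y \<longrightarrow> D_add (\<oplus>) x y)"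
proof
  assume "\<forall>x y. x \<oplus> x \<cdot> y \<oplus> x = x"
  then show "(\<forall>x y. x \<oplus> x \<cdot> y \<cdot> x \<oplus> x = x) \<and> (\<forall>x y. R_mul (\<cdot>) x y \<longrightarrow> D_add (\<oplus>) x y)"
    using R_mul_imp_D_add by (simp add: mult_assoc)
next
  assume "(\<forall>x y. x \<oplus> x \<cdot> y \<cdot> x \<oplus> x = x) \<and> (\<forall>x y. R_mul (\<cdot>) x y \<longrightarrow> D_add (\<oplus>) x y)"
  then show "\<forall>x y. x \<oplus> x \<cdot> y \<oplus> x = x"
    by (simp add: R_mul_sandwich_iff flip: D_add_sandwich_iff)
qed

end

theorem lemma3p2:
  fixes a m :: "'a \<Rightarrow> 'a \<Rightarrow> 'a"
  assumes "idem_semiring a m"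
  shows "(\<forall>x y. a (a x (m x y)) x = x) \<longleftrightarrow>
         ((\<forall>x y. a (a x (m (m x y) x)) x = x) \<and> (\<forall>x y. R_mul m x y \<longrightarrow> D_add a x y))"
  using idempotent_semiring.absorb_iff_sandwich_absorb_and_R_le_D
    [OF idem_semiring_imp_idempotent_semiring[OF assms]] .

end
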